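(* Let $\mathcal T_1=(T_{1,t})_{t\ge0}$ and $\mathcal T_2=(T_{2,t})_{t\ge0}$ be strongly continuous semigroups of contractions on the same Hilbert space $\mathcal H$ with cogenerators $T_1$ and $T_2$ respectively. The following are equivalent: (1) $T_{1,t}T_{2,t}=T_{2,t}T_{1,t}$ for every $t\ge0$; (2) $T_1T_2=T_2T_1$; (3) $T_{1,t}T_{2,s}=T_{2,s}T_{1,t}$ for all $t,s\ge0$.
   Context: If $A$ is the generator of a contractive $C_0$-semigroup, its cogenerator is the bounded operator $(A+I)(A-I)^{-1}$. *)

theory Defs
  imports "HOL-Analysis.Analysis"
begin

definition contraction_C0_semigroup ::
  "(real \<Rightarrow> ('a::{real_inner,complete_space} \<Rightarrow>\<^sub>L 'a)) \<Rightarrow> bool" where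
  "contraction_C0_semigroup T \<longleftrightarrow>
     T 0 = id_blinfun \<and>
     (\<forall>s\<ge>0. \<forall>t\<ge>0. T (s + t) = T s o\<^sub>L T t) \<and>
     (\<forall>t\<ge>0. norm (T t) \<le> 1) \<and>
     (\<forall>x. ((\<lambda>t. blinfun_apply (T t) x) \<longlongrightarrow> x) (at_right 0))"

definition generator_dom ::
  "(real \<Rightarrow> ('a::{real_inner,complete_space} \<Rightarrow>\<^sub>L 'a)) \<Rightarrow> 'a set" where
  "generator_dom T = {x. \<exists>y. ((\<lambda>h. (1 / h) *\<^sub>R (blinfun_apply (T h) x - x)) \<longlongrightarrow> y) (at_right 0)}"

definition generator ::
  "(real \<Rightarrow> ('a::{real_inner,complete_space} \<Rightarrow>\<^sub>L 'a)) \<Rightarrow> 'a \<Rightarrow> 'a" where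
  "generator T x = Lim (at_right 0) (\<lambda>h. (1 / h) *\<^sub>R (blinfun_apply (T h) x - x))"

text \<open>Cogenerator: the bounded operator V = (A + I)(A - I)^{-1}, i.e. the bounded operator with
  V ((A - I) x) = (A + I) x for all x in the domain of A.\<close>
definition cogenerator ::
  "(real \<Rightarrow> ('a::{real_inner,complete_space} \<Rightarrow>\<^sub>L 'a)) \<Rightarrow> ('a \<Rightarrow>\<^sub>L 'a)" where
  "cogenerator T = (THE V. \<forall>x\<in>generator_dom T.
      blinfun_apply V (generator T x - x) = generator T x + x)"

end

theory Submission
  imports Defs
begin

(* If A generates the contraction semigroup S, its cogenerator (A + I)(A - I)^-1 equals
   I - 2 R with R = (I - A)^-1, so two cogenerators commute iff the two resolvents R do.
   If S1 t and S2 t commute for every t, so do the resolvents (I - (S1 t - I)/t)^-1 and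
   (I - (S2 t - I)/t)^-1 of the bounded approximations of the generators, and these converge
   strongly to R1 and R2 as t -> 0+. Conversely, a bounded operator B commuting with R
   commutes with A, hence r |-> S (t - r) (B (S r x)) has derivative zero on (0, t), which
   gives B (S t x) = S t (B x). *)

lemma blinfun_compose_assoc: "(a o\<^sub>L b) o\<^sub>L c = a o\<^sub>L (b o\<^sub>L c)"
  by (rule blinfun_eqI) simp

lemma blinfun_commute_apply:
  fixes L K :: "'a::real_normed_vector \<Rightarrow>\<^sub>L 'a"
  shows "L o\<^sub>L K = K o\<^sub>L L \<Longrightarrow> L (K x) = K (L x)"
  by (metis blinfun_apply_blinfun_compose)

lemma blinfun_commuteI:
  fixes L K :: "'a::real_normed_vector \<Rightarrow>\<^sub>L 'a"
  shows "(\<And>x. L (K x) = K (L x)) \<Longrightarrow> L o\<^sub>L K = K o\<^sub>L L"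
  by (rule blinfun_eqI) simp

lemma id_minus_solution_unique:
  fixes K :: "'a::{real_normed_vector,complete_space} \<Rightarrow>\<^sub>L 'a"
  assumes "norm K < 1"
  shows "\<exists>!x. x - K x = y"
proof -
  have "\<exists>!x. y + K x = x"
  proof (rule banach_fix_type[where c = "norm K"])
    show "\<forall>x z. dist (y + K x) (y + K z) \<le> norm K * dist x z"
      using norm_blinfun[of K] by (simp add: dist_norm blinfun.diff_right[symmetric])
  qed (use assms in auto)
  then show ?thesis by (metis add_diff_cancel diff_add_cancel)
qed

definition inv_id_minus :: "('a::{real_normed_vector,complete_space} \<Rightarrow>\<^sub>L 'a) \<Rightarrow> 'a \<Rightarrow>\<^sub>L 'a" where
  "inv_id_minus K = Blinfun (\<lambda>y. THE x. x - K x = y)"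

lemma
  fixes K :: "'a::{real_normed_vector,complete_space} \<Rightarrow>\<^sub>L 'a"
  assumes K: "norm K < 1"
  shows inv_id_minus_eq_iff: "inv_id_minus K y = x \<longleftrightarrow> x - K x = y"
    and norm_inv_id_minus_le: "norm (inv_id_minus K) \<le> 1 / (1 - norm K)"
proof -
  define s where "s y = (THE x. x - K x = y)" for y
  have s: "x = s y \<longleftrightarrow> x - K x = y" for x y
    unfolding s_def
    using the1_equality[OF id_minus_solution_unique[OF K]] theI'[OF id_minus_solution_unique[OF K]]
    by metis
  have bound: "norm (s y) \<le> norm y * (1 / (1 - norm K))" for y
  proof -
    have "norm (s y) \<le> norm y + norm (K (s y))"
      using norm_triangle_ineq[of y "K (s y)"] s[of "s y" y] by (metis diff_add_cancel)
    also have "\<dots> \<le> norm y + norm K * norm (s y)" by (simp add: norm_blinfun)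
    finally show ?thesis using K by (simp add: field_simps)
  qed
  have "bounded_linear s"
  proof (rule bounded_linear_intro[OF _ _ bound])
    show "s (y + z) = s y + s z" for y z
      by (metis (no_types, lifting) s add_diff_add blinfun.add_right)
    show "s (r *\<^sub>R y) = r *\<^sub>R s y" for r y
      by (metis s blinfun.scaleR_right scaleR_right_diff_distrib)
  qed
  then have app: "inv_id_minus K y = s y" for y
    by (simp add: inv_id_minus_def s_def[abs_def] bounded_linear_Blinfun_apply)
  show "inv_id_minus K y = x \<longleftrightarrow> x - K x = y"
    using s by (metis app)
  show "norm (inv_id_minus K) \<le> 1 / (1 - norm K)"
    using K bound by (intro norm_blinfun_bound) (auto simp: app mult.commute)
qed

lemma inv_id_minus_id_minus:
  "norm K < 1 \<Longrightarrow> inv_id_minus K (x - K x) = x"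
  by (simp add: inv_id_minus_eq_iff)

lemma id_minus_inv_id_minus:
  "norm K < 1 \<Longrightarrow> inv_id_minus K y - K (inv_id_minus K y) = y"
  using inv_id_minus_eq_iff by blast

lemma inv_id_minus_commute:
  assumes "norm K < 1" and "L o\<^sub>L K = K o\<^sub>L L"
  shows "L o\<^sub>L inv_id_minus K = inv_id_minus K o\<^sub>L L"
proof (rule blinfun_commuteI)
  fix y
  have "L (inv_id_minus K y) - K (L (inv_id_minus K y)) = L y"
    using id_minus_inv_id_minus[OF assms(1), of y] blinfun_commute_apply[OF assms(2)]
    by (metis blinfun.diff_right)
  then show "L (inv_id_minus K y) = inv_id_minus K (L y)"
    using assms(1) by (simp add: inv_id_minus_eq_iff[symmetric])
qed

lemma has_vector_derivative_iff_tendsto_quotient: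
  fixes F :: "real \<Rightarrow> 'b::real_normed_vector"
  shows "(F has_vector_derivative d) (at a within s) \<longleftrightarrow>
    ((\<lambda>y. (1 / (y - a)) *\<^sub>R (F y - F a)) \<longlongrightarrow> d) (at a within s)"
proof -
  have eq: "norm (((F y - F a) - (y - a) *\<^sub>R d) /\<^sub>R norm (y - a)) =
      norm ((1 / (y - a)) *\<^sub>R (F y - F a) - d)" if "y \<noteq> a" for y
  proof -
    have "(1 / (y - a)) *\<^sub>R (F y - F a) - d = (1 / (y - a)) *\<^sub>R ((F y - F a) - (y - a) *\<^sub>R d)"
      using that by (simp add: scaleR_diff_right)
    then show ?thesis by (simp add: divide_inverse abs_inverse)
  qed
  have "(F has_vector_derivative d) (at a within s) \<longleftrightarrow>
      ((\<lambda>y. norm (((F y - F a) - (y - a) *\<^sub>R d) /\<^sub>R norm (y - a))) \<longlongrightarrow> 0) (at a within s)"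
    unfolding has_vector_derivative_def has_derivative_at_within tendsto_norm_zero_iff
    by (simp add: bounded_linear_scaleR_left)
  also have "\<dots> \<longleftrightarrow> ((\<lambda>y. norm ((1 / (y - a)) *\<^sub>R (F y - F a) - d)) \<longlongrightarrow> 0) (at a within s)"
    by (rule tendsto_cong, unfold eventually_at_filter, rule always_eventually) (use eq in simp)
  finally show ?thesis
    unfolding tendsto_norm_zero_iff LIM_zero_iff .
qed

lemma has_vector_derivative_right_quotient:
  fixes F :: "real \<Rightarrow> 'b::real_normed_vector"
  assumes "(F has_vector_derivative d) (at a within {a..b})" and "a < b"
  shows "((\<lambda>h. (1 / h) *\<^sub>R (F (a + h) - F a)) \<longlongrightarrow> d) (at_right 0)"
proof -
  have "filterlim (\<lambda>h. a + h) (at a within {a..b}) (at_right 0)"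
    unfolding filterlim_at
  proof
    show "\<forall>\<^sub>F h in at_right 0. a + h \<in> {a..b} \<and> a + h \<noteq> a"
      by (rule eventually_at_rightI[of 0 "b - a"]) (use assms(2) in auto)
    show "((\<lambda>h. a + h) \<longlongrightarrow> a) (at_right 0)"
      by (intro tendsto_eq_intros) auto
  qed
  from filterlim_compose[OF assms(1)[unfolded has_vector_derivative_iff_tendsto_quotient] this]
  show ?thesis by simp
qed

lemma tendsto_blinfun_apply_bounded:
  fixes P :: "'c \<Rightarrow> ('a::real_normed_vector \<Rightarrow>\<^sub>L 'b::real_normed_vector)"
  assumes bound: "eventually (\<lambda>t. norm (P t) \<le> B) F"
    and strong: "\<And>v. ((\<lambda>t. P t v) \<longlongrightarrow> P0 v) F"
    and u: "(u \<longlongrightarrow> u0) F"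
  shows "((\<lambda>t. P t (u t)) \<longlongrightarrow> P0 u0) F"
proof -
  have "((\<lambda>t. norm (u t - u0)) \<longlongrightarrow> 0) F"
    using u by (intro tendsto_norm_zero LIM_zero)
  from tendsto_mult_left[OF this, of B]
  have "((\<lambda>t. B * norm (u t - u0)) \<longlongrightarrow> 0) F"
    by simp
  moreover have "\<forall>\<^sub>F t in F. norm (P t (u t - u0)) \<le> B * norm (u t - u0)"
    using bound
  proof eventually_elim
    case (elim t)
    then show ?case
      using norm_blinfun[of "P t" "u t - u0"] mult_right_mono[OF elim, of "norm (u t - u0)"] by simp
  qed
  ultimately have "((\<lambda>t. P t (u t - u0)) \<longlongrightarrow> 0) F"
    by (rule Lim_null_comparison[rotated])
  from tendsto_add[OF this strong[of u0]] show ?thesis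
    by (simp add: blinfun.diff_right)
qed

lemma filterlim_uminus_at_0: "filterlim (\<lambda>h::real. - h) (at 0) (at 0)"
  by (simp add: filterlim_def filtermap_at_minus)

section \<open>Contraction semigroups on Banach spaces\<close>

abbreviation diff_quot :: "(real \<Rightarrow> ('a::real_normed_vector \<Rightarrow>\<^sub>L 'a)) \<Rightarrow> real \<Rightarrow> 'a \<Rightarrow> 'a" where
  "diff_quot S h x \<equiv> (1 / h) *\<^sub>R (S h x - x)"

lemma
  assumes "((\<lambda>h. diff_quot S h x) \<longlongrightarrow> y) (at_right 0)"
  shows generator_domI: "x \<in> generator_dom S"
    and generator_eqI: "generator S x = y"
proof -
  show "x \<in> generator_dom S"
    using assms unfolding generator_dom_def by blast
  show "generator S x = y"
    unfolding generator_def by (rule tendsto_Lim[OF _ assms]) (simp add: trivial_limit_at_right_real)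
qed

lemma tendsto_generator:
  assumes "x \<in> generator_dom S"
  shows "((\<lambda>h. diff_quot S h x) \<longlongrightarrow> generator S x) (at_right 0)"
proof -
  obtain y where y: "((\<lambda>h. diff_quot S h x) \<longlongrightarrow> y) (at_right 0)"
    using assms unfolding generator_dom_def by blast
  with generator_eqI[OF y] show ?thesis by simp
qed

locale contraction_semigroup =
  fixes S :: "real \<Rightarrow> ('a::{real_inner,banach} \<Rightarrow>\<^sub>L 'a)"
  assumes C0: "contraction_C0_semigroup S"
begin

abbreviation "D \<equiv> generator_dom S"
abbreviation "A \<equiv> generator S"

lemma S_0 [simp]: "S 0 = id_blinfun"
  using C0 by (simp add: contraction_C0_semigroup_def)

lemma S_add: "s \<ge> 0 \<Longrightarrow> t \<ge> 0 \<Longrightarrow> S (s + t) = S s o\<^sub>L S t"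
  using C0 by (simp add: contraction_C0_semigroup_def)

lemma S_add_apply: "s \<ge> 0 \<Longrightarrow> t \<ge> 0 \<Longrightarrow> S s (S t x) = S (s + t) x"
  by (simp add: S_add)

lemma S_commute: "s \<ge> 0 \<Longrightarrow> t \<ge> 0 \<Longrightarrow> S s o\<^sub>L S t = S t o\<^sub>L S s"
  by (metis S_add add.commute)

lemma norm_S_le: "t \<ge> 0 \<Longrightarrow> norm (S t) \<le> 1"
  using C0 by (simp add: contraction_C0_semigroup_def)

lemma norm_S_apply_le: "t \<ge> 0 \<Longrightarrow> norm (S t x) \<le> norm x"
  using norm_blinfun[of "S t" x] mult_right_mono[OF norm_S_le, of t "norm x"] by simp

lemma S_tendsto_at_right_0: "((\<lambda>t. S t x) \<longlongrightarrow> x) (at_right 0)"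
  using C0 by (simp add: contraction_C0_semigroup_def)

lemma norm_S_diff_le:
  assumes "s \<ge> 0" "t \<ge> 0"
  shows "norm (S t x - S s x) \<le> norm (S \<bar>t - s\<bar> x - x)"
proof (cases "s \<le> t")
  case True
  then have "S t x - S s x = S s (S (t - s) x - x)"
    using assms by (simp add: blinfun.diff_right S_add_apply)
  then show ?thesis using True assms(1) norm_S_apply_le by simp
next
  case False
  then have "S t x - S s x = - S t (S (s - t) x - x)"
    using assms by (simp add: blinfun.diff_right S_add_apply)
  then show ?thesis using False assms(2) norm_S_apply_le by simp
qed

lemma continuous_on_S: "continuous_on {0..} (\<lambda>t. S t x)"
  unfolding continuous_on_iff
proof (intro ballI allI impI)
  fix t0 e :: real assume t0: "t0 \<in> {0..}" and e: "e > 0"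
  obtain d where d: "d > 0" "\<And>h. 0 < h \<Longrightarrow> h < d \<Longrightarrow> norm (S h x - x) < e"
    using tendstoD[OF S_tendsto_at_right_0 e, unfolded eventually_at_right_field]
    by (auto simp: dist_norm)
  have "dist (S t x) (S t0 x) < e" if "t \<in> {0..}" "dist t t0 < d" for t
  proof (cases "t = t0")
    case False
    then have "norm (S \<bar>t - t0\<bar> x - x) < e"
      using d that by (simp add: dist_real_def)
    then show ?thesis
      using norm_S_diff_le[of t0 t x] that t0 by (simp add: dist_norm)
  qed (use e in simp)
  then show "\<exists>d>0. \<forall>t\<in>{0..}. dist t t0 < d \<longrightarrow> dist (S t x) (S t0 x) < e"
    using d(1) by blast
qed

lemma tendsto_S_apply:
  assumes "(f \<longlongrightarrow> c) F" "c \<ge> 0" "eventually (\<lambda>h. f h \<ge> 0) F"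
    and "(u \<longlongrightarrow> u0) F"
  shows "((\<lambda>h. S (f h) (u h)) \<longlongrightarrow> S c u0) F"
proof (rule tendsto_blinfun_apply_bounded[OF _ _ assms(4)])
  show "\<forall>\<^sub>F h in F. norm (S (f h)) \<le> 1"
    using assms(3) by eventually_elim (rule norm_S_le)
  show "((\<lambda>h. S (f h) v) \<longlongrightarrow> S c v) F" for v
    using continuous_on_tendsto_compose[OF continuous_on_S assms(1)] assms(2,3) by auto
qed

lemma generator_commute:
  assumes L: "\<And>h. h \<ge> 0 \<Longrightarrow> L o\<^sub>L S h = S h o\<^sub>L L" and x: "x \<in> D"
  shows "L x \<in> D" "A (L x) = L (A x)"
proof -
  have eq: "L (diff_quot S h x) = diff_quot S h (L x)" if "h \<ge> 0" for h
    using blinfun_commute_apply[OF L[OF that]] by (simp add: blinfun.diff_right blinfun.scaleR_right)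
  have "((\<lambda>h. L (diff_quot S h x)) \<longlongrightarrow> L (A x)) (at_right 0)"
    using tendsto_generator[OF x] by (rule blinfun.tendsto[OF tendsto_const])
  then have "((\<lambda>h. diff_quot S h (L x)) \<longlongrightarrow> L (A x)) (at_right 0)"
    by (rule Lim_transform_eventually) (auto intro!: eventually_at_rightI[of 0 1] simp: eq)
  then show "L x \<in> D" "A (L x) = L (A x)"
    by (rule generator_domI, rule generator_eqI)
qed

lemma generator_S_apply:
  "x \<in> D \<Longrightarrow> t \<ge> 0 \<Longrightarrow> S t x \<in> D \<and> A (S t x) = S t (A x)"
  using generator_commute[of "S t" x] S_commute[of t] by auto

lemma tendsto_orbit_diff_quot:
  assumes x: "x \<in> D" and p: "p > 0"
  shows "((\<lambda>h. (1 / h) *\<^sub>R (S (p + h) x - S p x)) \<longlongrightarrow> S p (A x)) (at 0)"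
proof (rule filterlim_split_at)
  have "((\<lambda>h. S p (diff_quot S h x)) \<longlongrightarrow> S p (A x)) (at_right 0)"
    using tendsto_generator[OF x] by (rule blinfun.tendsto[OF tendsto_const])
  then show "((\<lambda>h. (1 / h) *\<^sub>R (S (p + h) x - S p x)) \<longlongrightarrow> S p (A x)) (at_right 0)"
    by (rule Lim_transform_eventually, intro eventually_at_rightI[of 0 1])
      (use p in \<open>auto simp: blinfun.diff_right blinfun.scaleR_right S_add_apply\<close>)
next
  have "((\<lambda>h. S (p - h) (diff_quot S h x)) \<longlongrightarrow> S p (A x)) (at_right 0)"
  proof (rule tendsto_S_apply[OF _ _ _ tendsto_generator[OF x]])
    show "\<forall>\<^sub>F h in at_right 0. 0 \<le> p - h"
      by (rule eventually_at_rightI[of 0 p]) (use p in auto)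
  qed (use p in \<open>auto intro!: tendsto_eq_intros\<close>)
  then have "((\<lambda>h. (1 / - h) *\<^sub>R (S (p + - h) x - S p x)) \<longlongrightarrow> S p (A x)) (at_right 0)"
  proof (rule Lim_transform_eventually, intro eventually_at_rightI[of 0 p])
    fix h assume h: "h \<in> {0<..<p}"
    then have "S p x = S (p - h) (S h x)" by (simp add: S_add_apply)
    then show "S (p - h) (diff_quot S h x) = (1 / - h) *\<^sub>R (S (p + - h) x - S p x)"
      by (simp add: blinfun.diff_right blinfun.scaleR_right algebra_simps)
  qed (use p in auto)
  then show "((\<lambda>h. (1 / h) *\<^sub>R (S (p + h) x - S p x)) \<longlongrightarrow> S p (A x)) (at_left 0)"
    by (subst filterlim_at_left_to_right) simp
qed


subsection \<open>The resolvent\<close>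

text \<open>The resolvent (I - A)^-1 is obtained without improper integrals: the operator
  J = integral over [0, 1] of e^-s S s satisfies (I - A) J = I - e^-1 S 1, and the right-hand
  side is invertible.\<close>

definition damped_orbit :: "'a \<Rightarrow> real \<Rightarrow> 'a" where
  "damped_orbit x s = exp (- s) *\<^sub>R S s x"

lemma continuous_on_damped_orbit: "continuous_on {0..} (damped_orbit x)"
  unfolding damped_orbit_def[abs_def] by (intro continuous_intros continuous_on_S)

lemma damped_orbit_integrable: "0 \<le> a \<Longrightarrow> damped_orbit x integrable_on {a..b}"
  by (rule integrable_continuous_real, rule continuous_on_subset[OF continuous_on_damped_orbit]) auto

lemma bounded_linear_integral_damped_orbit:
  "bounded_linear (\<lambda>x. integral {0..1} (damped_orbit x))"
proof (rule bounded_linear_intro[where K = 1])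
  show "integral {0..1} (damped_orbit (x + y)) =
      integral {0..1} (damped_orbit x) + integral {0..1} (damped_orbit y)" for x y
  proof -
    have "damped_orbit (x + y) = (\<lambda>s. damped_orbit x s + damped_orbit y s)"
      by (auto simp: damped_orbit_def blinfun.add_right scaleR_add_right)
    then show ?thesis by (simp add: integral_add damped_orbit_integrable)
  qed
  show "integral {0..1} (damped_orbit (r *\<^sub>R x)) = r *\<^sub>R integral {0..1} (damped_orbit x)" for r x
  proof -
    have "damped_orbit (r *\<^sub>R x) = (\<lambda>s. r *\<^sub>R damped_orbit x s)"
      by (auto simp: damped_orbit_def blinfun.scaleR_right)
    then show ?thesis by simp
  qed
  show "norm (integral {0..1} (damped_orbit x)) \<le> norm x * 1" for x
  proof -
    have "norm (damped_orbit x s) \<le> norm x" if "s \<in> cbox 0 1" for s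
    proof -
      have "norm (damped_orbit x s) = exp (- s) * norm (S s x)"
        by (simp add: damped_orbit_def)
      also have "\<dots> \<le> 1 * norm x"
        using that norm_S_apply_le[of s x] by (intro mult_mono) auto
      finally show ?thesis by simp
    qed
    then show ?thesis
      using has_integral_bound[of "norm x" "damped_orbit x" _ 0 1] damped_orbit_integrable[of 0 x 1]
      by (auto simp: has_integral_integral)
  qed
qed

definition truncated_resolvent :: "'a \<Rightarrow>\<^sub>L 'a" where
  "truncated_resolvent = Blinfun (\<lambda>x. integral {0..1} (damped_orbit x))"

lemma truncated_resolvent_apply: "truncated_resolvent x = integral {0..1} (damped_orbit x)"
  by (simp add: truncated_resolvent_def bounded_linear_Blinfun_apply bounded_linear_integral_damped_orbit)

lemma blinfun_apply_truncated_resolvent: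
  fixes L :: "'a \<Rightarrow>\<^sub>L 'a"
  shows "L (truncated_resolvent x) = integral {0..1} (\<lambda>s. exp (- s) *\<^sub>R L (S s x))"
  using integral_blinfun_apply[OF damped_orbit_integrable[of 0 x 1], of L]
  by (simp add: truncated_resolvent_apply damped_orbit_def blinfun.scaleR_right)

lemma truncated_resolvent_commute:
  assumes "\<And>h. h \<ge> 0 \<Longrightarrow> L o\<^sub>L S h = S h o\<^sub>L L"
  shows "L o\<^sub>L truncated_resolvent = truncated_resolvent o\<^sub>L L"
proof (rule blinfun_commuteI)
  fix x
  have "L (truncated_resolvent x) = integral {0..1} (\<lambda>s. exp (- s) *\<^sub>R S s (L x))"
    unfolding blinfun_apply_truncated_resolvent
    by (rule integral_cong) (use assms in \<open>auto simp: blinfun_commute_apply\<close>)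
  then show "L (truncated_resolvent x) = truncated_resolvent (L x)"
    by (simp add: truncated_resolvent_apply damped_orbit_def[abs_def])
qed

lemma S_truncated_resolvent:
  assumes "h \<ge> 0"
  shows "S h (truncated_resolvent x) = exp h *\<^sub>R integral {h..1 + h} (damped_orbit x)"
proof -
  have "S h (truncated_resolvent x) = integral {0..1} (\<lambda>s. exp h *\<^sub>R damped_orbit x (s + h))"
    unfolding blinfun_apply_truncated_resolvent
    by (rule integral_cong) (use assms in \<open>auto simp: damped_orbit_def S_add_apply add.commute
        simp flip: exp_add\<close>)
  also have "\<dots> = exp h *\<^sub>R integral {h..1 + h} (damped_orbit x)"
    using integral_shift_real_ivl[of h h "1 + h" "damped_orbit x"] by simp
  finally show ?thesis .
qed

lemma generator_truncated_resolvent: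
  shows truncated_resolvent_in_dom: "truncated_resolvent x \<in> D"
    and generator_truncated_resolvent_eq:
      "A (truncated_resolvent x) = truncated_resolvent x + exp (- 1) *\<^sub>R S 1 x - x"
proof -
  define f where "f = damped_orbit x"
  define F where "F a = integral {0..a} f" for a
  define G where "G h = exp h *\<^sub>R (F (1 + h) - F h)" for h
  \<comment> \<open>G h = S h (J x) for small h > 0, so the difference quotient of J x is that of G at 0\<close>
  have dF: "(F has_vector_derivative f a) (at a within {0..2})" if "a \<in> {0..2}" for a
    unfolding F_def f_def
    by (rule integral_has_vector_derivative[OF continuous_on_subset[OF continuous_on_damped_orbit] that])
      auto
  have "((\<lambda>h. 1 + h) has_vector_derivative 1) (at 0 within {0..1})"
    by (auto intro!: derivative_eq_intros)
  moreover have "(F has_vector_derivative f 1) (at 1 within (\<lambda>h. 1 + h) ` {0..1})"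
    by (rule has_vector_derivative_within_subset[OF dF]) auto
  ultimately have dF1: "((\<lambda>h. F (1 + h)) has_vector_derivative f 1) (at 0 within {0..1})"
    using vector_diff_chain_within[of "\<lambda>h. 1 + h" 1 0 "{0..1}" F "f 1"] by (simp add: o_def)
  have dF0: "(F has_vector_derivative f 0) (at 0 within {0..1})"
    by (rule has_vector_derivative_within_subset[OF dF]) auto
  have "(G has_vector_derivative (exp 0 *\<^sub>R (f 1 - f 0) + exp 0 *\<^sub>R (F (1 + 0) - F 0)))
      (at 0 within {0..1})"
    unfolding G_def
    by (intro has_vector_derivative_scaleR has_vector_derivative_diff dF1 dF0
        DERIV_exp[THEN has_field_derivative_at_within])
  then have "((\<lambda>h. (1 / h) *\<^sub>R (G (0 + h) - G 0)) \<longlongrightarrow> truncated_resolvent x + exp (- 1) *\<^sub>R S 1 x - x)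
      (at_right 0)"
    using has_vector_derivative_right_quotient[of G _ 0 1]
    by (simp add: F_def f_def damped_orbit_def truncated_resolvent_apply algebra_simps)
  moreover have "G h = S h (truncated_resolvent x)" if "0 < h" "h < 1" for h
  proof -
    have "F h + integral {h..1 + h} f = F (1 + h)"
      unfolding F_def f_def using that damped_orbit_integrable[of 0 x "1 + h"]
      by (intro Henstock_Kurzweil_Integration.integral_combine) auto
    then have "F (1 + h) - F h = integral {h..1 + h} f"
      by (metis add_diff_cancel_left')
    then show ?thesis
      using that by (simp add: G_def f_def S_truncated_resolvent)
  qed
  moreover have "G 0 = truncated_resolvent x"
    by (simp add: G_def F_def f_def truncated_resolvent_apply)
  ultimately have "((\<lambda>h. diff_quot S h (truncated_resolvent x)) \<longlongrightarrow>
      truncated_resolvent x + exp (- 1) *\<^sub>R S 1 x - x) (at_right 0)"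
    by (elim Lim_transform_eventually) (auto intro!: eventually_at_rightI[of 0 1])
  then show "truncated_resolvent x \<in> D"
    and "A (truncated_resolvent x) = truncated_resolvent x + exp (- 1) *\<^sub>R S 1 x - x"
    by (rule generator_domI, rule generator_eqI)
qed

lemma norm_exp_S1_less: "norm (exp (- 1) *\<^sub>R S 1) < 1"
proof -
  have "norm (exp (- 1) *\<^sub>R S 1) \<le> exp (- 1) * 1"
    using norm_S_le[of 1] by (simp add: mult_left_mono)
  also have "\<dots> < 1" by simp
  finally show ?thesis .
qed

lemma inv_id_minus_S1_commute:
  assumes "L o\<^sub>L S 1 = S 1 o\<^sub>L L"
  shows "L o\<^sub>L inv_id_minus (exp (- 1) *\<^sub>R S 1) = inv_id_minus (exp (- 1) *\<^sub>R S 1) o\<^sub>L L"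
  using assms by (intro inv_id_minus_commute[OF norm_exp_S1_less] blinfun_commuteI)
    (simp add: blinfun.scaleR_right blinfun.scaleR_left blinfun_commute_apply)

definition resolvent :: "'a \<Rightarrow>\<^sub>L 'a" where
  "resolvent = truncated_resolvent o\<^sub>L inv_id_minus (exp (- 1) *\<^sub>R S 1)"

lemma resolvent_commute:
  assumes L: "\<And>h. h \<ge> 0 \<Longrightarrow> L o\<^sub>L S h = S h o\<^sub>L L"
  shows "L o\<^sub>L resolvent = resolvent o\<^sub>L L"
  using truncated_resolvent_commute[OF L] inv_id_minus_S1_commute[OF L[of 1]]
  by (simp add: resolvent_def flip: blinfun_compose_assoc) (simp add: blinfun_compose_assoc)

lemma resolvent_in_dom: "resolvent y \<in> D"
  by (simp add: resolvent_def truncated_resolvent_in_dom)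

lemma generator_resolvent: "A (resolvent y) = resolvent y - y"
  using id_minus_inv_id_minus[OF norm_exp_S1_less, of y]
  by (simp add: resolvent_def generator_truncated_resolvent_eq blinfun.scaleR_left algebra_simps)

lemma resolvent_generator:
  assumes x: "x \<in> D"
  shows "resolvent (x - A x) = x"
proof -
  let ?J = truncated_resolvent and ?N = "inv_id_minus (exp (- 1) *\<^sub>R S 1)"
  have J: "?J o\<^sub>L S h = S h o\<^sub>L ?J" if "h \<ge> 0" for h
    using truncated_resolvent_commute[of "S h"] S_commute[OF that] by simp
  have "resolvent (x - A x) = ?N (?J x - ?J (A x))"
    using blinfun_commute_apply[OF inv_id_minus_S1_commute[OF J]]
    by (simp add: resolvent_def blinfun.diff_right)
  also have "?J (A x) = A (?J x)"
    using generator_commute(2)[OF J x] by simp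
  also have "?N (?J x - A (?J x)) = x"
    using inv_id_minus_id_minus[OF norm_exp_S1_less, of x]
    by (simp add: generator_truncated_resolvent_eq blinfun.scaleR_left)
  finally show ?thesis .
qed

lemma resolvent_inject:
  assumes "resolvent u = resolvent v"
  shows "u = v"
proof -
  have "resolvent u - A (resolvent u) = resolvent v - A (resolvent v)"
    using assms by simp
  then show ?thesis by (simp add: generator_resolvent)
qed

lemma cogenerator_condition_iff:
  fixes V :: "'a \<Rightarrow>\<^sub>L 'a"
  shows "(\<forall>x\<in>D. V (A x - x) = A x + x) \<longleftrightarrow> V = id_blinfun - 2 *\<^sub>R resolvent"
proof
  assume V: "\<forall>x\<in>D. V (A x - x) = A x + x"
  show "V = id_blinfun - 2 *\<^sub>R resolvent"
  proof (rule blinfun_eqI)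
    fix z
    have "A (resolvent (- z)) - resolvent (- z) = z"
      by (simp add: generator_resolvent)
    moreover have "A (resolvent (- z)) + resolvent (- z) = z - 2 *\<^sub>R resolvent z"
      by (simp add: generator_resolvent) (simp add: blinfun.minus_right scaleR_2)
    ultimately have "V z = z - 2 *\<^sub>R resolvent z"
      using V resolvent_in_dom by metis
    then show "V z = (id_blinfun - 2 *\<^sub>R resolvent) z"
      by (simp add: blinfun.diff_left blinfun.scaleR_left)
  qed
next
  assume V: "V = id_blinfun - 2 *\<^sub>R resolvent"
  show "\<forall>x\<in>D. V (A x - x) = A x + x"
  proof
    fix x assume "x \<in> D"
    then have "resolvent (A x - x) = - x"
      using resolvent_generator by (metis blinfun.minus_right minus_diff_eq)
    then show "V (A x - x) = A x + x"
      by (simp add: V blinfun.diff_left blinfun.scaleR_left) (simp add: algebra_simps scaleR_2)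
  qed
qed

text \<open>(A + I)(A - I)^-1 = I + 2 (A - I)^-1 = I - 2 R.\<close>

lemma cogenerator_eq: "cogenerator S = id_blinfun - 2 *\<^sub>R resolvent"
  unfolding cogenerator_def cogenerator_condition_iff by simp

subsection \<open>Operators commuting with the resolvent\<close>

lemma resolvent_commute_imp_generator_commute:
  assumes "B o\<^sub>L resolvent = resolvent o\<^sub>L B" and "z \<in> D"
  shows "B z \<in> D \<and> A (B z) = B (A z)"
proof -
  have e: "B z = resolvent (B (z - A z))"
    using resolvent_generator[OF assms(2)] blinfun_commute_apply[OF assms(1)] by metis
  have "A (B z) = B z - B (z - A z)"
    by (subst (1 2) e) (rule generator_resolvent)
  moreover have "B z \<in> D"
    by (subst e) (rule resolvent_in_dom)
  ultimately show ?thesis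
    by (simp add: blinfun.diff_right)
qed

lemma interpolating_orbit_has_derivative_zero:
  fixes B :: "'a \<Rightarrow>\<^sub>L 'a"
  assumes B: "\<And>z. z \<in> D \<Longrightarrow> B z \<in> D \<and> A (B z) = B (A z)"
    and x: "x \<in> D" and r: "0 < r" "r < t"
  shows "((\<lambda>r. S (t - r) (B (S r x))) has_vector_derivative 0) (at r)"
proof -
  define y where "y = B (S r x)"
  have y: "y \<in> D" "A y = B (S r (A x))"
    using B generator_S_apply[OF x] r unfolding y_def by auto
  have lim: "((\<lambda>h. t - (r + h)) \<longlongrightarrow> t - r) (at 0)"
    by (intro tendsto_eq_intros) auto
  have "\<forall>\<^sub>F h in at 0. 0 < t - (r + h)"
    using order_tendstoD(1)[OF lim, of 0] r by simp
  then have "\<forall>\<^sub>F h in at 0. 0 \<le> t - (r + h)"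
    by (rule eventually_mono) simp
  moreover have "((\<lambda>h. B ((1 / h) *\<^sub>R (S (r + h) x - S r x))) \<longlongrightarrow> B (S r (A x))) (at 0)"
    by (rule blinfun.tendsto[OF tendsto_const tendsto_orbit_diff_quot[OF x r(1)]])
  ultimately have "((\<lambda>h. S (t - (r + h)) (B ((1 / h) *\<^sub>R (S (r + h) x - S r x))))
      \<longlongrightarrow> S (t - r) (A y)) (at 0)"
    using r lim by (auto simp: y intro!: tendsto_S_apply)
  moreover have "((\<lambda>h. (1 / - h) *\<^sub>R (S ((t - r) + - h) y - S (t - r) y))
      \<longlongrightarrow> S (t - r) (A y)) (at 0)"
    using filterlim_compose[OF tendsto_orbit_diff_quot[OF y(1)] filterlim_uminus_at_0] r by simp
  \<comment> \<open>the two terms of the product rule cancel because B commutes with A\<close>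
  ultimately have "((\<lambda>h. S (t - (r + h)) (B ((1 / h) *\<^sub>R (S (r + h) x - S r x)))
      - (1 / - h) *\<^sub>R (S ((t - r) + - h) y - S (t - r) y)) \<longlongrightarrow> 0) (at 0)"
    using tendsto_diff by fastforce
  then have "((\<lambda>h. (1 / (r + h - r)) *\<^sub>R
      (S (t - (r + h)) (B (S (r + h) x)) - S (t - r) (B (S r x)))) \<longlongrightarrow> 0) (at 0)"
    by (simp add: y_def blinfun.scaleR_right blinfun.diff_right algebra_simps)
  then show ?thesis
    unfolding has_vector_derivative_iff_tendsto_quotient by (subst LIM_offset_zero_iff) auto
qed

lemma generator_commute_imp_S_commute_on_dom:
  fixes B :: "'a \<Rightarrow>\<^sub>L 'a"
  assumes B: "\<And>z. z \<in> D \<Longrightarrow> B z \<in> D \<and> A (B z) = B (A z)"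
    and x: "x \<in> D" and t: "t \<ge> 0"
  shows "B (S t x) = S t (B x)"
proof -
  define w where "w r = S (t - r) (B (S r x))" for r
  have "continuous_on {0..t} (\<lambda>r. B (S r x))"
    by (intro blinfun.continuous_on continuous_on_const continuous_on_subset[OF continuous_on_S]) auto
  then have "continuous_on {0..t} w"
    unfolding continuous_on_def w_def
  proof (intro ballI tendsto_S_apply)
    show "\<forall>\<^sub>F r' in at r within {0..t}. 0 \<le> t - r'" for r
      unfolding eventually_at_filter by (rule always_eventually) auto
  qed (auto intro!: tendsto_eq_intros)
  moreover have "(w has_derivative (\<lambda>h. 0)) (at r within {0..t})" if "r \<in> {0..t} - {0, t}" for r
    using interpolating_orbit_has_derivative_zero[OF B x, of r t] that
    by (auto simp: w_def[abs_def] has_vector_derivative_def intro: has_derivative_at_withinI)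
  ultimately have "w t = w 0"
    using t by (intro has_derivative_zero_unique_strong_interval[of "{0, t}"]) auto
  then show ?thesis by (simp add: w_def)
qed

lemma resolvent_commute_imp_S_commute:
  assumes BR: "B o\<^sub>L resolvent = resolvent o\<^sub>L B" and t: "t \<ge> 0"
  shows "B o\<^sub>L S t = S t o\<^sub>L B"
proof (rule blinfun_commuteI)
  fix y
  have SR: "S t o\<^sub>L resolvent = resolvent o\<^sub>L S t"
    using resolvent_commute[of "S t"] S_commute t by simp
  \<comment> \<open>compare the images under the injective resolvent, which lie in the domain of A\<close>
  have "resolvent (B (S t y)) = S t (B (resolvent y))"
    using generator_commute_imp_S_commute_on_dom[OF resolvent_commute_imp_generator_commute[OF BR]
        resolvent_in_dom t]
    by (simp add: blinfun_commute_apply[OF BR] blinfun_commute_apply[OF SR])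
  also have "\<dots> = resolvent (S t (B y))"
    by (simp add: blinfun_commute_apply[OF BR] blinfun_commute_apply[OF SR])
  finally show "B (S t y) = S t (B y)"
    by (rule resolvent_inject)
qed

text \<open>The resolvent of the bounded operator (S h - I)/h, which approximates the generator.\<close>

definition yosida_resolvent :: "real \<Rightarrow> 'a \<Rightarrow>\<^sub>L 'a" where
  "yosida_resolvent h = (h / (1 + h)) *\<^sub>R inv_id_minus ((1 / (1 + h)) *\<^sub>R S h)"

lemma norm_scaled_S_le:
  assumes "h > 0"
  shows "norm ((1 / (1 + h)) *\<^sub>R S h) \<le> 1 / (1 + h)"
  using assms norm_S_le[of h] by (auto intro!: divide_right_mono)

lemma norm_scaled_S_less: "h > 0 \<Longrightarrow> norm ((1 / (1 + h)) *\<^sub>R S h) < 1"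
  using norm_scaled_S_le[of h] by (simp add: order_le_less_trans)

lemma norm_yosida_resolvent_le:
  assumes h: "h > 0"
  shows "norm (yosida_resolvent h) \<le> 1"
proof -
  let ?K = "(1 / (1 + h)) *\<^sub>R S h"
  have "1 / (1 + h) < 1"
    using h by simp
  then have "1 / (1 - norm ?K) \<le> 1 / (1 - 1 / (1 + h))"
    using norm_scaled_S_le[OF h] norm_scaled_S_less[OF h]
    by (intro divide_left_mono mult_pos_pos) auto
  with norm_inv_id_minus_le[OF norm_scaled_S_less[OF h]]
  have "norm (inv_id_minus ?K) \<le> 1 / (1 - 1 / (1 + h))"
    by linarith
  also have "\<dots> = (1 + h) / h"
    using h by (simp add: field_simps)
  finally show ?thesis
    using h by (simp add: yosida_resolvent_def field_simps)
qed

lemma yosida_resolvent_diff_quot: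
  assumes h: "h > 0"
  shows "yosida_resolvent h (y - diff_quot S h y) = y"
proof -
  let ?K = "(1 / (1 + h)) *\<^sub>R S h"
  have c: "(1 + h) / h = 1 + 1 / h" "(1 + h) / h * (1 / (1 + h)) = 1 / h"
    using h by (simp_all add: field_simps)
  have "((1 + h) / h) *\<^sub>R (y - ?K y) = (1 + 1 / h) *\<^sub>R y - (1 / h) *\<^sub>R S h y"
    by (simp only: blinfun.scaleR_left scaleR_diff_right scaleR_scaleR c(2), simp only: c(1))
  then have "y - diff_quot S h y = ((1 + h) / h) *\<^sub>R (y - ?K y)"
    by (simp add: algebra_simps)
  then have "yosida_resolvent h (y - diff_quot S h y) =
      ((1 + h) / h * (h / (1 + h))) *\<^sub>R inv_id_minus ?K (y - ?K y)"
    by (simp only: yosida_resolvent_def blinfun.scaleR_left blinfun.scaleR_right scaleR_scaleR)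
  also have "(1 + h) / h * (h / (1 + h)) = 1"
    using h by simp
  finally show ?thesis
    using inv_id_minus_id_minus[OF norm_scaled_S_less[OF h]] by simp
qed

lemma yosida_resolvent_commute:
  assumes "h > 0" and "L o\<^sub>L S h = S h o\<^sub>L L"
  shows "L o\<^sub>L yosida_resolvent h = yosida_resolvent h o\<^sub>L L"
proof -
  have "L o\<^sub>L (1 / (1 + h)) *\<^sub>R S h = (1 / (1 + h)) *\<^sub>R S h o\<^sub>L L"
    by (intro blinfun_commuteI)
      (simp add: blinfun.scaleR_right blinfun.scaleR_left blinfun_commute_apply[OF assms(2)])
  note LN = inv_id_minus_commute[OF norm_scaled_S_less[OF assms(1)] this]
  show ?thesis
    by (intro blinfun_commuteI)
      (simp add: yosida_resolvent_def blinfun.scaleR_left blinfun.scaleR_right blinfun_commute_apply[OF LN])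
qed

lemma tendsto_yosida_resolvent: "((\<lambda>h. yosida_resolvent h y) \<longlongrightarrow> resolvent y) (at_right 0)"
proof -
  define x where "x = resolvent y"
  have x: "x \<in> D" "y = x - A x"
    unfolding x_def by (simp_all add: resolvent_in_dom generator_resolvent)
  have "yosida_resolvent h y - x = yosida_resolvent h (diff_quot S h x - A x)" if "h > 0" for h
    using yosida_resolvent_diff_quot[OF that, of x] x(2)
    by (simp add: blinfun.diff_right diff_eq_eq add.commute)
  then have "\<forall>\<^sub>F h in at_right 0. norm (yosida_resolvent h y - x) \<le> norm (diff_quot S h x - A x)"
    by (auto intro!: eventually_at_rightI[of 0 1] order_trans[OF norm_blinfun]
        mult_left_le_one_le norm_yosida_resolvent_le)
  moreover have "((\<lambda>h. norm (diff_quot S h x - A x)) \<longlongrightarrow> 0) (at_right 0)"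
    using tendsto_generator[OF x(1)] by (intro tendsto_norm_zero LIM_zero)
  ultimately have "((\<lambda>h. yosida_resolvent h y - x) \<longlongrightarrow> 0) (at_right 0)"
    by (rule Lim_null_comparison)
  then show ?thesis
    by (simp add: LIM_zero_iff x_def)
qed

lemma eventually_norm_yosida_resolvent_le:
  "\<forall>\<^sub>F h in at_right 0. norm (yosida_resolvent h) \<le> 1"
  using eventually_at_right_less by (rule eventually_mono) (rule norm_yosida_resolvent_le)

end

lemma resolvents_commute_if_semigroups_commute:
  assumes "contraction_semigroup S1" and "contraction_semigroup S2"
    and comm: "\<And>t. t > 0 \<Longrightarrow> S1 t o\<^sub>L S2 t = S2 t o\<^sub>L S1 t"
  shows "contraction_semigroup.resolvent S1 o\<^sub>L contraction_semigroup.resolvent S2 =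
    contraction_semigroup.resolvent S2 o\<^sub>L contraction_semigroup.resolvent S1"
proof (rule blinfun_commuteI)
  interpret S1: contraction_semigroup S1 by fact
  interpret S2: contraction_semigroup S2 by fact
  fix y
  have approx_commute:
    "S1.yosida_resolvent t (S2.yosida_resolvent t y) = S2.yosida_resolvent t (S1.yosida_resolvent t y)"
    if t: "t > 0" for t
  proof -
    have "S1 t o\<^sub>L S2.yosida_resolvent t = S2.yosida_resolvent t o\<^sub>L S1 t"
      by (rule S2.yosida_resolvent_commute[OF t comm[OF t]])
    then have "S2.yosida_resolvent t o\<^sub>L S1.yosida_resolvent t =
        S1.yosida_resolvent t o\<^sub>L S2.yosida_resolvent t"
      by (intro S1.yosida_resolvent_commute[OF t]) simp
    then show ?thesis by (simp add: blinfun_commute_apply)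
  qed
  have "((\<lambda>t. S1.yosida_resolvent t (S2.yosida_resolvent t y)) \<longlongrightarrow> S1.resolvent (S2.resolvent y))
      (at_right 0)"
    by (rule tendsto_blinfun_apply_bounded[OF S1.eventually_norm_yosida_resolvent_le
          S1.tendsto_yosida_resolvent S2.tendsto_yosida_resolvent])
  moreover have "\<forall>\<^sub>F t in at_right 0.
      S1.yosida_resolvent t (S2.yosida_resolvent t y) = S2.yosida_resolvent t (S1.yosida_resolvent t y)"
    using eventually_at_right_less by (rule eventually_mono) (rule approx_commute)
  ultimately have "((\<lambda>t. S2.yosida_resolvent t (S1.yosida_resolvent t y)) \<longlongrightarrow> S1.resolvent (S2.resolvent y))
      (at_right 0)"
    by (rule Lim_transform_eventually)
  moreover have "((\<lambda>t. S2.yosida_resolvent t (S1.yosida_resolvent t y)) \<longlongrightarrow> S2.resolvent (S1.resolvent y))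
      (at_right 0)"
    by (rule tendsto_blinfun_apply_bounded[OF S2.eventually_norm_yosida_resolvent_le
          S2.tendsto_yosida_resolvent S1.tendsto_yosida_resolvent])
  ultimately show "S1.resolvent (S2.resolvent y) = S2.resolvent (S1.resolvent y)"
    by (rule tendsto_unique[rotated]) (simp add: trivial_limit_at_right_real)
qed

lemma id_minus_scaleR_commute_iff:
  fixes P Q :: "'a::real_normed_vector \<Rightarrow>\<^sub>L 'a"
  assumes "c \<noteq> 0"
  shows "(id_blinfun - c *\<^sub>R P) o\<^sub>L (id_blinfun - c *\<^sub>R Q) =
      (id_blinfun - c *\<^sub>R Q) o\<^sub>L (id_blinfun - c *\<^sub>R P) \<longleftrightarrow> P o\<^sub>L Q = Q o\<^sub>L P"
proof -
  have expand: "(id_blinfun - c *\<^sub>R P) o\<^sub>L (id_blinfun - c *\<^sub>R Q) =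
      (id_blinfun - c *\<^sub>R (P + Q)) + (c * c) *\<^sub>R (P o\<^sub>L Q)" for P Q :: "'a \<Rightarrow>\<^sub>L 'a"
    by (rule blinfun_eqI) (simp add: blinfun.diff_left blinfun.diff_right blinfun.scaleR_left
        blinfun.scaleR_right blinfun.add_left algebra_simps)
  show ?thesis
    unfolding expand add.commute[of Q P] using assms by simp
qed

theorem semigroups_commute_iff_cogenerators_commute:
  fixes S1 S2 :: "real \<Rightarrow> ('a::{real_inner,banach} \<Rightarrow>\<^sub>L 'a)"
  assumes "contraction_C0_semigroup S1" and "contraction_C0_semigroup S2"
  shows "((\<forall>t\<ge>0. S1 t o\<^sub>L S2 t = S2 t o\<^sub>L S1 t) \<longleftrightarrow>
          cogenerator S1 o\<^sub>L cogenerator S2 = cogenerator S2 o\<^sub>L cogenerator S1)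
       \<and> (cogenerator S1 o\<^sub>L cogenerator S2 = cogenerator S2 o\<^sub>L cogenerator S1 \<longleftrightarrow>
          (\<forall>t\<ge>0. \<forall>s\<ge>0. S1 t o\<^sub>L S2 s = S2 s o\<^sub>L S1 t))"
proof -
  interpret S1: contraction_semigroup S1 by unfold_locales fact
  interpret S2: contraction_semigroup S2 by unfold_locales fact
  have cogenerators: "cogenerator S1 o\<^sub>L cogenerator S2 = cogenerator S2 o\<^sub>L cogenerator S1 \<longleftrightarrow>
      S1.resolvent o\<^sub>L S2.resolvent = S2.resolvent o\<^sub>L S1.resolvent"
    by (simp add: S1.cogenerator_eq S2.cogenerator_eq id_minus_scaleR_commute_iff)
  have "S1 t o\<^sub>L S2 s = S2 s o\<^sub>L S1 t"
    if "S1.resolvent o\<^sub>L S2.resolvent = S2.resolvent o\<^sub>L S1.resolvent" "t \<ge> 0" "s \<ge> 0" for t s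
  proof -
    have "S1.resolvent o\<^sub>L S2 s = S2 s o\<^sub>L S1.resolvent"
      using S2.resolvent_commute_imp_S_commute that by simp
    then show ?thesis
      using S1.resolvent_commute_imp_S_commute[of "S2 s" t] that by simp
  qed
  moreover have "S1.resolvent o\<^sub>L S2.resolvent = S2.resolvent o\<^sub>L S1.resolvent"
    if "\<forall>t\<ge>0. S1 t o\<^sub>L S2 t = S2 t o\<^sub>L S1 t"
    using that by (intro resolvents_commute_if_semigroups_commute) (unfold_locales, simp_all add: assms)
  ultimately show ?thesis
    unfolding cogenerators by blast
qed

section \<open>Transfer to complete inner product spaces\<close>

text \<open>The sort {real_inner, complete_space} does not entail the class banach, which the
  integration theory used above requires. We therefore transfer along an isomorphic copy
  of the space that is an instance of banach.\<close>

typedef (overloaded) ('a::"{real_inner,complete_space}") hilbert = "UNIV :: 'a set"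
  morphisms of_hilbert to_hilbert by simp

setup_lifting type_definition_hilbert

instantiation hilbert :: ("{real_inner,complete_space}") real_inner
begin

lift_definition zero_hilbert :: "'a hilbert" is 0 .
lift_definition plus_hilbert :: "'a hilbert \<Rightarrow> 'a hilbert \<Rightarrow> 'a hilbert" is "(+)" .
lift_definition minus_hilbert :: "'a hilbert \<Rightarrow> 'a hilbert \<Rightarrow> 'a hilbert" is "(-)" .
lift_definition uminus_hilbert :: "'a hilbert \<Rightarrow> 'a hilbert" is uminus .
lift_definition scaleR_hilbert :: "real \<Rightarrow> 'a hilbert \<Rightarrow> 'a hilbert" is scaleR .
lift_definition inner_hilbert :: "'a hilbert \<Rightarrow> 'a hilbert \<Rightarrow> real" is inner .
lift_definition norm_hilbert :: "'a hilbert \<Rightarrow> real" is norm .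
definition sgn_hilbert :: "'a hilbert \<Rightarrow> 'a hilbert" where
  "sgn_hilbert x = inverse (norm x) *\<^sub>R x"
definition dist_hilbert :: "'a hilbert \<Rightarrow> 'a hilbert \<Rightarrow> real" where
  "dist_hilbert x y = norm (x - y)"
definition uniformity_hilbert :: "('a hilbert \<times> 'a hilbert) filter" where
  "uniformity_hilbert = (INF e\<in>{0<..}. principal {(x, y). dist x y < e})"
definition open_hilbert :: "'a hilbert set \<Rightarrow> bool" where
  "open_hilbert U \<longleftrightarrow> (\<forall>x\<in>U. \<forall>\<^sub>F (x', y) in uniformity. x' = x \<longrightarrow> y \<in> U)"

instance
  by standard (unfold sgn_hilbert_def dist_hilbert_def uniformity_hilbert_def open_hilbert_def,
      (rule refl | transfer, auto simp: algebra_simps inner_commute inner_add_left norm_eq_sqrt_inner)+)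

end

lemma norm_to_hilbert [simp]: "norm (to_hilbert x) = norm x"
  and norm_of_hilbert [simp]: "norm (of_hilbert z) = norm z"
  by (transfer, rule refl)+

lemma to_hilbert_add: "to_hilbert (x + y) = to_hilbert x + to_hilbert y"
  and to_hilbert_diff: "to_hilbert (x - y) = to_hilbert x - to_hilbert y"
  and to_hilbert_scaleR: "to_hilbert (c *\<^sub>R x) = c *\<^sub>R to_hilbert x"
  by (transfer, rule refl)+

lemma bounded_linear_to_hilbert: "bounded_linear to_hilbert"
  by (rule bounded_linear_intro[where K = 1]) (simp_all add: to_hilbert_add to_hilbert_scaleR)

lemma bounded_linear_of_hilbert: "bounded_linear of_hilbert"
  by (rule bounded_linear_intro[where K = 1]) (transfer, simp)+

lemma tendsto_to_hilbert_iff: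
  "((\<lambda>h. to_hilbert (f h)) \<longlongrightarrow> to_hilbert l) F \<longleftrightarrow> (f \<longlongrightarrow> l) F"
  using bounded_linear.tendsto[OF bounded_linear_of_hilbert, of "\<lambda>h. to_hilbert (f h)" "to_hilbert l"]
    bounded_linear.tendsto[OF bounded_linear_to_hilbert, of f l F]
  by (auto simp: to_hilbert_inverse)

instance hilbert :: ("{real_inner,complete_space}") banach
proof
  fix X :: "nat \<Rightarrow> 'a hilbert"
  assume "Cauchy X"
  then have "Cauchy (\<lambda>n. of_hilbert (X n))"
    unfolding Cauchy_def dist_norm by transfer
  then obtain l where "(\<lambda>n. of_hilbert (X n)) \<longlonglongrightarrow> l"
    using Cauchy_convergent convergent_def by blast
  then show "convergent X"
    unfolding convergent_def tendsto_to_hilbert_iff[symmetric] by (auto simp: of_hilbert_inverse)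
qed

lift_definition hilbert_op ::
    "('a::{real_inner,complete_space} \<Rightarrow>\<^sub>L 'a) \<Rightarrow> 'a hilbert \<Rightarrow>\<^sub>L 'a hilbert"
  is "\<lambda>M. to_hilbert \<circ> M \<circ> of_hilbert"
  by (auto simp: o_def intro!: bounded_linear_compose[OF bounded_linear_to_hilbert]
      bounded_linear_compose[OF _ bounded_linear_of_hilbert])

lift_definition hilbert_op_inv ::
    "('a::{real_inner,complete_space} hilbert \<Rightarrow>\<^sub>L 'a hilbert) \<Rightarrow> 'a \<Rightarrow>\<^sub>L 'a"
  is "\<lambda>M. of_hilbert \<circ> M \<circ> to_hilbert"
  by (auto simp: o_def intro!: bounded_linear_compose[OF bounded_linear_of_hilbert]
      bounded_linear_compose[OF _ bounded_linear_to_hilbert])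

lemma hilbert_op_apply: "hilbert_op M z = to_hilbert (M (of_hilbert z))"
  by transfer simp

lemma hilbert_op_hilbert_op_inv [simp]: "hilbert_op (hilbert_op_inv M) = M"
  by (rule blinfun_eqI)
    (simp add: hilbert_op_apply hilbert_op_inv.rep_eq of_hilbert_inverse to_hilbert_inverse)

lemma hilbert_op_inject [simp]: "hilbert_op M = hilbert_op L \<longleftrightarrow> M = L"
  by (metis blinfun_eqI hilbert_op_apply to_hilbert_inject to_hilbert_inverse UNIV_I)

lemma hilbert_op_compose: "hilbert_op (M o\<^sub>L L) = hilbert_op M o\<^sub>L hilbert_op L"
  by (rule blinfun_eqI) (simp add: hilbert_op_apply to_hilbert_inverse)

lemma hilbert_op_commute_iff:
  "hilbert_op M o\<^sub>L hilbert_op L = hilbert_op L o\<^sub>L hilbert_op M \<longleftrightarrow> M o\<^sub>L L = L o\<^sub>L M"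
  by (simp flip: hilbert_op_compose)

lemma hilbert_op_id: "hilbert_op id_blinfun = id_blinfun"
  by (rule blinfun_eqI) (simp add: hilbert_op_apply of_hilbert_inverse)

lemma norm_hilbert_op_le: "norm (hilbert_op M) \<le> norm M"
  by (rule norm_blinfun_bound) (auto simp: hilbert_op_apply norm_blinfun[of M, THEN order_trans])

lemma contraction_C0_semigroup_hilbert_op:
  assumes "contraction_C0_semigroup S"
  shows "contraction_C0_semigroup (\<lambda>t. hilbert_op (S t))"
proof -
  have "((\<lambda>t. to_hilbert (S t (of_hilbert z))) \<longlongrightarrow> to_hilbert (of_hilbert z)) (at_right 0)" for z
    using assms unfolding tendsto_to_hilbert_iff contraction_C0_semigroup_def by blast
  then show ?thesis
    using assms unfolding contraction_C0_semigroup_def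
    by (auto simp: hilbert_op_id hilbert_op_compose hilbert_op_apply of_hilbert_inverse
        intro: order_trans[OF norm_hilbert_op_le])
qed

lemma diff_quot_hilbert_op:
  "diff_quot (\<lambda>t. hilbert_op (S t)) h (to_hilbert x) = to_hilbert (diff_quot S h x)"
  by (simp add: hilbert_op_apply to_hilbert_inverse to_hilbert_diff to_hilbert_scaleR)

lemma generator_hilbert_op:
  shows generator_dom_hilbert_op:
      "to_hilbert x \<in> generator_dom (\<lambda>t. hilbert_op (S t)) \<longleftrightarrow> x \<in> generator_dom S"
    and generator_hilbert_op_eq: "x \<in> generator_dom S \<Longrightarrow>
      generator (\<lambda>t. hilbert_op (S t)) (to_hilbert x) = to_hilbert (generator S x)"
proof -
  let ?S = "\<lambda>t. hilbert_op (S t)"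
  have lim: "((\<lambda>h. diff_quot ?S h (to_hilbert x)) \<longlongrightarrow> to_hilbert y) (at_right 0) \<longleftrightarrow>
      ((\<lambda>h. diff_quot S h x) \<longlongrightarrow> y) (at_right 0)" for y
    unfolding diff_quot_hilbert_op by (rule tendsto_to_hilbert_iff)
  have ex: "(\<exists>z. P z) \<longleftrightarrow> (\<exists>y. P (to_hilbert y))" for P :: "'a hilbert \<Rightarrow> bool"
    by (metis of_hilbert_inverse)
  show "to_hilbert x \<in> generator_dom ?S \<longleftrightarrow> x \<in> generator_dom S"
    unfolding generator_dom_def mem_Collect_eq ex lim ..
  show "generator ?S (to_hilbert x) = to_hilbert (generator S x)" if "x \<in> generator_dom S"
    using lim tendsto_generator[OF that] by (blast intro: generator_eqI)
qed

lemma cogenerator_hilbert_op: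
  assumes S: "contraction_C0_semigroup S"
  shows "cogenerator (\<lambda>t. hilbert_op (S t)) = hilbert_op (cogenerator S)"
proof -
  let ?S = "\<lambda>t. hilbert_op (S t)"
  interpret H: contraction_semigroup ?S
    by unfold_locales (rule contraction_C0_semigroup_hilbert_op[OF S])
  let ?V = "id_blinfun - 2 *\<^sub>R H.resolvent"
  have condition: "(\<forall>x\<in>generator_dom S. V (generator S x - x) = generator S x + x) \<longleftrightarrow>
      (\<forall>z\<in>H.D. hilbert_op V (H.A z - z) = H.A z + z)" (is "_ \<longleftrightarrow> (\<forall>z\<in>H.D. ?Q z)")
    for V :: "'a \<Rightarrow>\<^sub>L 'a"
  proof -
    have "?Q (to_hilbert x) \<longleftrightarrow> V (generator S x - x) = generator S x + x"
      if "x \<in> generator_dom S" for x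
      using that by (simp add: generator_hilbert_op_eq hilbert_op_apply to_hilbert_inverse
          to_hilbert_inject flip: to_hilbert_diff to_hilbert_add)
    moreover have "z \<in> H.D \<longleftrightarrow> of_hilbert z \<in> generator_dom S" for z
      using generator_dom_hilbert_op[of "of_hilbert z" S] by (simp add: of_hilbert_inverse)
    ultimately show ?thesis
      by (metis of_hilbert_inverse to_hilbert_inverse UNIV_I)
  qed
  have "hilbert_op V = ?V \<longleftrightarrow> V = hilbert_op_inv ?V" for V
    by (metis hilbert_op_hilbert_op_inv hilbert_op_inject)
  then have "(\<forall>x\<in>generator_dom S. V (generator S x - x) = generator S x + x) \<longleftrightarrow>
      V = hilbert_op_inv ?V" for V :: "'a \<Rightarrow>\<^sub>L 'a"
    unfolding condition H.cogenerator_condition_iff by simp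
  then have "cogenerator S = hilbert_op_inv ?V"
    unfolding cogenerator_def by simp
  then show ?thesis
    by (simp add: H.cogenerator_eq)
qed

theorem mainTheorem5:
  fixes S1 S2 :: "real \<Rightarrow> ('a::{real_inner,complete_space} \<Rightarrow>\<^sub>L 'a)"
    and T1 T2 :: "'a \<Rightarrow>\<^sub>L 'a"
  assumes "contraction_C0_semigroup S1" and "contraction_C0_semigroup S2"
    and "T1 = cogenerator S1" and "T2 = cogenerator S2"
  shows "((\<forall>t\<ge>0. S1 t o\<^sub>L S2 t = S2 t o\<^sub>L S1 t) \<longleftrightarrow> T1 o\<^sub>L T2 = T2 o\<^sub>L T1)
       \<and> (T1 o\<^sub>L T2 = T2 o\<^sub>L T1 \<longleftrightarrow> (\<forall>t\<ge>0. \<forall>s\<ge>0. S1 t o\<^sub>L S2 s = S2 s o\<^sub>L S1 t))"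
  using semigroups_commute_iff_cogenerators_commute[OF contraction_C0_semigroup_hilbert_op[OF assms(1)]
      contraction_C0_semigroup_hilbert_op[OF assms(2)]]
  by (simp add: assms cogenerator_hilbert_op hilbert_op_commute_iff)

end
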